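(* There does not exist an $S(3,K_4^{(3)}+e,v)$ for $v=5$ or $v=6$.
   Context: $K_4^{(3)}+e$ denotes the 3-uniform hypergraph with vertex set $\{1,2,3,4,5\}$ and edge set $\{\{1,2,3\},\{1,2,4\},\{1,3,4\},\{2,3,4\},\{3,4,5\}\}$. An $S(3,K_4^{(3)}+e,v)$ is a collection of 3-uniform hypergraphs (blocks) on subsets of a $v$-set $X$, each isomorphic to $K_4^{(3)}+e$, whose edge sets partition the set of all 3-subsets of $X$. *)

theory Defs
  imports Main
begin

definition K4e_edges :: "nat set set" where
  "K4e_edges = {{1,2,3},{1,2,4},{1,3,4},{2,3,4},{3,4,5}}"

text \<open>Since K_4^(3)+e has no isolated vertices, a block is determined by its
  edge set, which is the image of the edges of K_4^(3)+e under an injection of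
  {1,...,5} into X.\<close>
definition is_K4e_block :: "'a set \<Rightarrow> 'a set set \<Rightarrow> bool" where
  "is_K4e_block X E \<longleftrightarrow>
     (\<exists>f. inj_on f {1..5} \<and> f ` {1..5} \<subseteq> X \<and> E = (\<lambda>e. f ` e) ` K4e_edges)"

definition is_S3_K4e :: "'a set \<Rightarrow> 'a set set set \<Rightarrow> bool" where
  "is_S3_K4e X D \<longleftrightarrow>
     (\<forall>E\<in>D. is_K4e_block X E) \<and>
     (\<forall>T. T \<subseteq> X \<and> card T = 3 \<longrightarrow> (\<exists>!E. E \<in> D \<and> T \<in> E))"

end

theory Submission imports Defs begin

text \<open>Every block contains all four triples of a 4-set, its core, plus one further triple.
  Two distinct blocks of a design cannot share a triple, so their cores meet in at most
  two points; hence on 5 points there is at most one block and on 6 points the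
  complements of the cores are disjoint pairs, so there are at most three blocks.  But the
  \<open>v choose 3\<close> triples need at least \<open>(v choose 3) / 5\<close> blocks, that is 2 resp. 4.\<close>

definition triples :: "'a set \<Rightarrow> 'a set set" where
  "triples A = {T. T \<subseteq> A \<and> card T = 3}"

lemma card_triples: "finite A \<Longrightarrow> card (triples A) = card A choose 3"
  unfolding triples_def by (rule n_subsets)

lemma card_K4e_edges_le: "card K4e_edges \<le> 5"
  unfolding K4e_edges_def
  using card_length[of "[{1,2,3},{1,2,4},{1,3,4},{2,3,4},{3,4,5::nat}]"]
  by (simp only: list.set list.size)

lemma triples_1234_subset_K4e_edges: "triples {1,2,3,4::nat} \<subseteq> K4e_edges"
proof
  fix S assume "S \<in> triples {1,2,3,4::nat}"
  then have S: "S \<subseteq> {1,2,3,4}" "card S = 3" by (auto simp: triples_def)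
  moreover have "S \<noteq> {1,2,3,4}"
  proof
    assume "S = {1,2,3,4}"
    with S(2) show False by simp
  qed
  ultimately obtain x where x: "x \<in> {1,2,3,4::nat}" "x \<notin> S" by blast
  then have "S \<subseteq> {1,2,3,4} - {x}" using S(1) by blast
  moreover have "card ({1,2,3,4::nat} - {x}) = 3" using x(1) by auto
  ultimately have "S = {1,2,3,4} - {x}" using card_subset_eq S(2) by (metis finite.simps finite_Diff)
  moreover have "x = 1 \<or> x = 2 \<or> x = 3 \<or> x = 4" using x(1) by simp
  moreover have "{1,2,3,4::nat} - {1} = {2,3,4}" "{1,2,3,4::nat} - {2} = {1,3,4}"
    "{1,2,3,4::nat} - {3} = {1,2,4}" "{1,2,3,4::nat} - {4} = {1,2,3}" by auto
  ultimately show "S \<in> K4e_edges" unfolding K4e_edges_def by fastforce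
qed

lemma K4e_block_core:
  assumes "is_K4e_block X E"
  obtains K where "K \<subseteq> X" "card K = 4" "triples K \<subseteq> E"
proof -
  obtain f where f: "inj_on f {1..5}" "f ` {1..5} \<subseteq> X" "E = (\<lambda>e. f ` e) ` K4e_edges"
    using assms unfolding is_K4e_block_def by blast
  have sub: "{1,2,3,4::nat} \<subseteq> {1..5}" by auto
  have inj: "inj_on f {1,2,3,4}" using inj_on_subset[OF f(1) sub] .
  have "triples (f ` {1,2,3,4}) \<subseteq> E"
  proof
    fix T assume "T \<in> triples (f ` {1,2,3,4})"
    then have T: "T \<subseteq> f ` {1,2,3,4}" "card T = 3" by (auto simp: triples_def)
    define S where "S = {x \<in> {1,2,3,4::nat}. f x \<in> T}"
    have S: "S \<subseteq> {1,2,3,4}" unfolding S_def by blast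
    have T_eq: "T = f ` S" using T(1) unfolding S_def by blast
    have "card S = 3"
      using T(2) card_image[OF inj_on_subset[OF inj S]] T_eq by simp
    with S have "S \<in> triples {1,2,3,4}" unfolding triples_def by blast
    with triples_1234_subset_K4e_edges T_eq show "T \<in> E" using f(3) by blast
  qed
  moreover have "card (f ` {1,2,3,4}) = 4" using card_image[OF inj] by simp
  moreover have "f ` {1,2,3,4} \<subseteq> X" using f(2) sub by blast
  ultimately show thesis using that by blast
qed

lemma K4e_block_card_le:
  assumes "is_K4e_block X E"
  shows "card E \<le> 5"
proof -
  obtain f where "E = (\<lambda>e. f ` e) ` K4e_edges"
    using assms unfolding is_K4e_block_def by blast
  moreover have "finite K4e_edges" by (simp add: K4e_edges_def)
  ultimately show ?thesis using card_image_le card_K4e_edges_le le_trans by metis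
qed

lemma K4e_edges_subset_Pow: "K4e_edges \<subseteq> Pow {1..5}"
  by (simp add: K4e_edges_def)

lemma K4e_block_subset_Pow: "is_K4e_block X E \<Longrightarrow> E \<subseteq> Pow X"
  unfolding is_K4e_block_def using K4e_edges_subset_Pow by blast

lemma S3_K4e_block_count:
  assumes "finite X" "is_S3_K4e X D"
  shows "card X choose 3 \<le> 5 * card D"
proof -
  have blocks: "\<And>E. E \<in> D \<Longrightarrow> is_K4e_block X E"
    using assms(2) unfolding is_S3_K4e_def by blast
  have card_blocks: "\<And>E. E \<in> D \<Longrightarrow> card E \<le> 5"
    using blocks K4e_block_card_le by blast
  have "\<Union>D \<subseteq> Pow X" using blocks K4e_block_subset_Pow by blast
  then have "finite (\<Union>D)" using assms(1) by (meson finite_Pow_iff finite_subset)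
  moreover have "triples X \<subseteq> \<Union>D"
  proof
    fix T assume "T \<in> triples X"
    then obtain E where "E \<in> D" "T \<in> E"
      using assms(2) unfolding is_S3_K4e_def triples_def by blast
    then show "T \<in> \<Union>D" by blast
  qed
  ultimately have "card (triples X) \<le> card (\<Union>D)" by (intro card_mono)
  also have "\<dots> \<le> (\<Sum>E\<in>D. card E)" by (rule card_Union_le_sum_card)
  also have "\<dots> \<le> card D * 5"
    using sum_bounded_above[of D card 5, OF card_blocks] by simp
  finally show ?thesis by (simp add: card_triples[OF assms(1)])
qed

lemma S3_K4e_cores_meet_in_at_most_two:
  assumes "is_S3_K4e X D" "E\<^sub>1 \<in> D" "E\<^sub>2 \<in> D" "E\<^sub>1 \<noteq> E\<^sub>2"
    and "K\<^sub>1 \<subseteq> X" "triples K\<^sub>1 \<subseteq> E\<^sub>1" "triples K\<^sub>2 \<subseteq> E\<^sub>2"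
  shows "card (K\<^sub>1 \<inter> K\<^sub>2) \<le> 2"
proof (rule ccontr)
  assume "\<not> ?thesis"
  then have "3 \<le> card (K\<^sub>1 \<inter> K\<^sub>2)" by simp
  then obtain T where T: "T \<subseteq> K\<^sub>1 \<inter> K\<^sub>2" "card T = 3"
    using obtain_subset_with_card_n by metis
  then have "T \<in> triples K\<^sub>1" "T \<in> triples K\<^sub>2" unfolding triples_def by auto
  then have "T \<in> E\<^sub>1" "T \<in> E\<^sub>2" using assms(6,7) by blast+
  moreover have "\<exists>!E. E \<in> D \<and> T \<in> E"
    using assms(1,5) T unfolding is_S3_K4e_def by blast
  ultimately show False using assms(2-4) by blast
qed

lemma S3_K4e_core_family:
  assumes "is_S3_K4e X D"
  obtains F where "card F = card D" "\<And>K. K \<in> F \<Longrightarrow> K \<subseteq> X \<and> card K = 4"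
    "pairwise (\<lambda>K L. card (K \<inter> L) \<le> 2) F"
proof -
  have "\<forall>E\<in>D. \<exists>K. K \<subseteq> X \<and> card K = 4 \<and> triples K \<subseteq> E"
    using assms K4e_block_core unfolding is_S3_K4e_def by metis
  then obtain core where core: "\<And>E. E \<in> D \<Longrightarrow>
      core E \<subseteq> X \<and> card (core E) = 4 \<and> triples (core E) \<subseteq> E"
    by metis
  have meet: "card (core E\<^sub>1 \<inter> core E\<^sub>2) \<le> 2"
    if "E\<^sub>1 \<in> D" "E\<^sub>2 \<in> D" "E\<^sub>1 \<noteq> E\<^sub>2" for E\<^sub>1 E\<^sub>2
    using S3_K4e_cores_meet_in_at_most_two[OF assms that] core that by blast
  have "inj_on core D"
    by (rule inj_onI, rule ccontr) (use meet core in fastforce)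
  show thesis
  proof (rule that)
    show "card (core ` D) = card D" using card_image[OF \<open>inj_on core D\<close>] .
    show "K \<subseteq> X \<and> card K = 4" if "K \<in> core ` D" for K using core that by blast
    show "pairwise (\<lambda>K L. card (K \<inter> L) \<le> 2) (core ` D)"
      unfolding pairwise_def using meet by blast
  qed
qed

lemma card_Un_ge_6_if_card_Int_le_2:
  assumes "finite K" "finite L" "card K = 4" "card L = 4" "card (K \<inter> L) \<le> 2"
  shows "6 \<le> card (K \<union> L)"
  using card_Un_Int[OF assms(1,2)] assms(3-5) by linarith

lemma four_set_packing_Un_ge_6:
  assumes "finite X" "\<And>K. K \<in> F \<Longrightarrow> K \<subseteq> X \<and> card K = 4"
    and "pairwise (\<lambda>K L. card (K \<inter> L) \<le> 2) F" "K \<in> F" "L \<in> F" "K \<noteq> L"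
  shows "6 \<le> card (K \<union> L)" "K \<union> L \<subseteq> X"
proof -
  have "card (K \<inter> L) \<le> 2" using assms(3-6) unfolding pairwise_def by blast
  moreover have "K \<subseteq> X" "L \<subseteq> X" "card K = 4" "card L = 4" using assms(2,4,5) by auto
  ultimately show "6 \<le> card (K \<union> L)" "K \<union> L \<subseteq> X"
    using card_Un_ge_6_if_card_Int_le_2 finite_subset[OF _ assms(1)] by (metis, blast)
qed

lemma four_set_packing_finite:
  assumes "finite X" "\<And>K. K \<in> F \<Longrightarrow> K \<subseteq> X \<and> card K = 4"
  shows "finite F"
proof -
  have "F \<subseteq> Pow X" using assms(2) by blast
  then show ?thesis using assms(1) by (meson finite_Pow_iff finite_subset)
qed

lemma four_set_packing_card_5:
  assumes "finite X" "card X = 5" "\<And>K. K \<in> F \<Longrightarrow> K \<subseteq> X \<and> card K = 4"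
    and "pairwise (\<lambda>K L. card (K \<inter> L) \<le> 2) F"
  shows "card F \<le> 1"
proof -
  have "K = L" if "K \<in> F" "L \<in> F" for K L
  proof (rule ccontr)
    assume "K \<noteq> L"
    note Un = four_set_packing_Un_ge_6[OF assms(1,3,4) that this]
    have "card (K \<union> L) \<le> 5" using card_mono[OF assms(1) Un(2)] assms(2) by simp
    with Un(1) show False by simp
  qed
  then show ?thesis
    using four_set_packing_finite[OF assms(1,3)] by (simp add: card_le_Suc0_iff_eq)
qed

lemma four_set_packing_card_6:
  assumes "finite X" "card X = 6" "\<And>K. K \<in> F \<Longrightarrow> K \<subseteq> X \<and> card K = 4"
    and "pairwise (\<lambda>K L. card (K \<inter> L) \<le> 2) F"
  shows "card F \<le> 3"
proof -
  have card_compl: "card (X - K) = 2" if "K \<in> F" for K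
  proof -
    have "K \<subseteq> X" "card K = 4" using assms(3) that by auto
    then show ?thesis using card_Diff_subset[of K X] finite_subset[OF _ assms(1)] assms(2) by simp
  qed
  have compl_disjoint: "(X - K) \<inter> (X - L) = {}" if "K \<in> F" "L \<in> F" "K \<noteq> L" for K L
  proof -
    note Un = four_set_packing_Un_ge_6[OF assms(1,3,4) that]
    have "K \<union> L = X"
      using card_subset_eq[OF assms(1) Un(2)] card_mono[OF assms(1) Un(2)] Un(1) assms(2)
      by linarith
    then show ?thesis by blast
  qed
  have "2 * card F = (\<Sum>K\<in>F. card (X - K))" using card_compl by simp
  also have "\<dots> = card (\<Union>K\<in>F. X - K)"
    using four_set_packing_finite[OF assms(1,3)] assms(1) compl_disjoint
    by (intro card_UN_disjoint[symmetric]) auto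
  also have "\<dots> \<le> card X" by (rule card_mono[OF assms(1)]) blast
  finally show ?thesis using assms(2) by simp
qed

theorem lemma4p1:
  fixes X :: "'a set" and D :: "'a set set set"
  assumes "finite X" and "card X = 5 \<or> card X = 6"
  shows "\<not> is_S3_K4e X D"
proof
  assume S: "is_S3_K4e X D"
  obtain F where F: "card F = card D" "\<And>K. K \<in> F \<Longrightarrow> K \<subseteq> X \<and> card K = 4"
      "pairwise (\<lambda>K L. card (K \<inter> L) \<le> 2) F"
    using S3_K4e_core_family[OF S] by blast
  have count: "card X choose 3 \<le> 5 * card D" using S3_K4e_block_count[OF assms(1) S] .
  from assms(2) show False
  proof
    assume "card X = 5"
    with four_set_packing_card_5[OF assms(1) _ F(2,3)] count F(1) show False
      by (simp add: numeral_eq_Suc)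
  next
    assume "card X = 6"
    with four_set_packing_card_6[OF assms(1) _ F(2,3)] count F(1) show False
      by (simp add: numeral_eq_Suc)
  qed
qed

end
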